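(* Let $L=\mathbb Z^2$ with $B(x,y)=x\begin{pmatrix}2&1\\1&8\end{pmatrix}y^T$ (the lattice of the form $x^2+xy+4y^2$), $Q(x)=\frac12B(x,x)$, and for $\alpha,\beta\in\mathbb Q^2$ put $\theta_{\alpha,\beta}(\tau,z)=\sum_{v\in\mathbb Z^2}e(B(\beta,v))\,e(\tau Q(\alpha+v)+B(\alpha+v,z))$ on $\mathbb H\times\mathbb C^2$. Then the nine functions $\theta_{\alpha,\beta}^3$ with $\alpha\in\{(0,0),(\frac13,\frac13),(\frac23,\frac23)\}$ and $\beta\in\{(0,0),(\frac13,0),(\frac23,0)\}$ are $\mathbb C$-linearly independent.
   Context: $e(x)=\exp(2\pi ix)$, $\mathbb H$ the upper half plane; $B$ is extended bilinearly to $\mathbb C^2$. *)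

theory Defs
  imports "HOL-Analysis.Analysis"
begin

definition e :: "complex \<Rightarrow> complex" where
  "e x = exp (2 * of_real pi * \<i> * x)"

definition Bf :: "complex \<times> complex \<Rightarrow> complex \<times> complex \<Rightarrow> complex" where
  "Bf x y = 2 * fst x * fst y + fst x * snd y + snd x * fst y + 8 * snd x * snd y"

definition Qf :: "complex \<times> complex \<Rightarrow> complex" where
  "Qf x = Bf x x / 2"

definition vec_of_int :: "int \<times> int \<Rightarrow> complex \<times> complex" where
  "vec_of_int v = (of_int (fst v), of_int (snd v))"

definition vec_of_rat :: "rat \<times> rat \<Rightarrow> complex \<times> complex" where
  "vec_of_rat v = (of_rat (fst v), of_rat (snd v))"

definition theta :: "rat \<times> rat \<Rightarrow> rat \<times> rat \<Rightarrow> complex \<Rightarrow> complex \<times> complex \<Rightarrow> complex" where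
  "theta \<alpha> \<beta> \<tau> z = (\<Sum>\<^sub>\<infinity>v\<in>(UNIV :: (int \<times> int) set).
      e (Bf (vec_of_rat \<beta>) (vec_of_int v)) *
      e (\<tau> * Qf (vec_of_rat \<alpha> + vec_of_int v) + Bf (vec_of_rat \<alpha> + vec_of_int v) z))"

end

theory Submission
  imports Defs "HOL-Real_Asymp.Real_Asymp"
begin

(*
  Evaluate at tau = i t and z = w - tau p with w, p real.  Completing the square, the v-th term
  of theta_{alpha,beta} has modulus exp (-2 pi t (Q (alpha + v - p) - Q p)), so after rescaling
  by exp (2 pi t (Q p - m)), where m is the minimum of Q (alpha + v - p) over v in Z^2, only the
  lattice points attaining m survive as t -> oo.  For p = (j/3 + 1/2, j/3) and w = (s, 0) the
  minimum 1/4 is attained at v = (0,0) and v = (1,0) when alpha = (j/3, j/3), while for the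
  other two alphas all values are at least 5/12.  A vanishing combination of the cubes
  therefore yields, for each j, sum_k c_jk (1 + omega^k r)^3 = 0 with omega = e(2/3) and
  r = e(2s) on the unit circle; r = 1, -1, i force all c_jk = 0.
*)

lemma summable_on_int_geometric:
  fixes r :: real
  assumes "0 \<le> r" "r < 1"
  shows "(\<lambda>n::int. r ^ nat \<bar>n\<bar>) summable_on UNIV"
proof -
  have geometric: "(\<lambda>n::nat. r ^ n) summable_on UNIV"
    using assms by (intro summable_nonneg_imp_summable_on summable_geometric) auto
  have "(\<lambda>n::int. r ^ nat \<bar>n\<bar>) summable_on range int"
    by (subst summable_on_reindex) (auto simp: o_def geometric)
  moreover have "(\<lambda>n::int. r ^ nat \<bar>n\<bar>) summable_on range (\<lambda>n. - int n)"
    by (subst summable_on_reindex) (auto simp: o_def geometric inj_on_def)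
  moreover have "range int \<union> range (\<lambda>n. - int n) = (UNIV :: int set)"
  proof (intro set_eqI iffI)
    fix n :: int
    show "n \<in> range int \<union> range (\<lambda>n. - int n)"
      by (cases n rule: int_cases2) auto
  qed simp_all
  ultimately show ?thesis
    by (metis summable_on_union)
qed

lemma summable_on_int_pair_geometric:
  fixes r :: real
  assumes "0 \<le> r" "r < 1"
  shows "(\<lambda>v::int \<times> int. r ^ nat \<bar>fst v\<bar> * r ^ nat \<bar>snd v\<bar>) summable_on UNIV"
proof -
  have rows: "((\<lambda>n. r ^ nat \<bar>m\<bar> * r ^ nat \<bar>n\<bar>) has_sum r ^ nat \<bar>m\<bar> * (\<Sum>\<^sub>\<infinity>n::int. r ^ nat \<bar>n\<bar>)) UNIV"
    for m :: int
    using assms by (intro has_sum_cmult_right has_sum_infsum summable_on_int_geometric)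
  have "(\<lambda>v::int \<times> int. r ^ nat \<bar>fst v\<bar> * r ^ nat \<bar>snd v\<bar>) summable_on UNIV \<times> UNIV"
    by (rule summable_on_SigmaI[OF _ summable_on_cmult_left[OF summable_on_int_geometric[OF assms]]])
      (use rows assms in auto)
  then show ?thesis
    by simp
qed

lemma
  fixes h :: "'a \<Rightarrow> real" and c :: "'a \<Rightarrow> 'b :: banach"
  assumes c_bounded: "\<And>v. norm (c v) \<le> 1" and summable: "(\<lambda>v. exp (- h v)) summable_on A"
    and gap: "\<And>v. v \<in> A \<Longrightarrow> h v \<ge> \<delta>" and "t \<ge> 1"
  shows abs_summable_on_exp_decay: "(\<lambda>v. exp (- t * h v) *\<^sub>R c v) abs_summable_on A"
    and norm_infsum_exp_decay_le:
      "norm (\<Sum>\<^sub>\<infinity>v\<in>A. exp (- t * h v) *\<^sub>R c v) \<le> exp (- (t - 1) * \<delta>) * (\<Sum>\<^sub>\<infinity>v\<in>A. exp (- h v))"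
proof -
  have bound: "norm (exp (- t * h v) *\<^sub>R c v) \<le> exp (- (t - 1) * \<delta>) * exp (- h v)" if "v \<in> A" for v
  proof -
    have "0 \<le> (t - 1) * (h v - \<delta>)"
      using gap[OF that] \<open>t \<ge> 1\<close> by simp
    then have "exp (- t * h v) \<le> exp (- (t - 1) * \<delta>) * exp (- h v)"
      by (simp add: exp_add[symmetric] algebra_simps)
    moreover have "norm (exp (- t * h v) *\<^sub>R c v) \<le> exp (- t * h v)"
      using c_bounded[of v] by simp
    ultimately show ?thesis
      by linarith
  qed
  then show abs_summable: "(\<lambda>v. exp (- t * h v) *\<^sub>R c v) abs_summable_on A"
    by (intro summable_on_comparison_test[OF summable_on_cmult_right[OF summable]]) auto
  have "norm (\<Sum>\<^sub>\<infinity>v\<in>A. exp (- t * h v) *\<^sub>R c v) \<le> (\<Sum>\<^sub>\<infinity>v\<in>A. norm (exp (- t * h v) *\<^sub>R c v))"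
    by (rule norm_infsum_bound[OF abs_summable])
  also have "\<dots> \<le> (\<Sum>\<^sub>\<infinity>v\<in>A. exp (- (t - 1) * \<delta>) * exp (- h v))"
    by (rule infsum_mono[OF abs_summable summable_on_cmult_right[OF summable] bound])
  also have "\<dots> = exp (- (t - 1) * \<delta>) * (\<Sum>\<^sub>\<infinity>v\<in>A. exp (- h v))"
    by (rule infsum_cmult_right')
  finally show "norm (\<Sum>\<^sub>\<infinity>v\<in>A. exp (- t * h v) *\<^sub>R c v) \<le> exp (- (t - 1) * \<delta>) * (\<Sum>\<^sub>\<infinity>v\<in>A. exp (- h v))" .
qed

lemma tendsto_infsum_exp_decay:
  fixes h :: "'a \<Rightarrow> real" and c :: "'a \<Rightarrow> 'b :: banach"
  assumes "finite M" and c_bounded: "\<And>v. norm (c v) \<le> 1"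
    and summable: "(\<lambda>v. exp (- h v)) summable_on UNIV"
    and h_M: "\<And>v. v \<in> M \<Longrightarrow> h v = 0" and h_gap: "\<And>v. v \<notin> M \<Longrightarrow> h v \<ge> \<delta>" and "\<delta> > 0"
  shows "((\<lambda>t. \<Sum>\<^sub>\<infinity>v. exp (- t * h v) *\<^sub>R c v) \<longlongrightarrow> (\<Sum>v\<in>M. c v)) at_top"
proof -
  define F where "F t v = exp (- t * h v) *\<^sub>R c v" for t v
  have summable_tail: "(\<lambda>v. exp (- h v)) summable_on -M"
    using summable_on_subset_banach[OF summable] by blast
  define C where "C = (\<Sum>\<^sub>\<infinity>v\<in>-M. exp (- h v))"
  have tail_abs_summable: "F t abs_summable_on -M" if "t \<ge> 1" for t
    unfolding F_def
    by (rule abs_summable_on_exp_decay[where \<delta> = \<delta>]) (use c_bounded summable_tail h_gap that in auto)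
  have tail_bound: "norm (\<Sum>\<^sub>\<infinity>v\<in>-M. F t v) \<le> exp (- (t - 1) * \<delta>) * C" if "t \<ge> 1" for t
    unfolding F_def C_def
    by (rule norm_infsum_exp_decay_le) (use c_bounded summable_tail h_gap that in auto)
  have "((\<lambda>t. exp (- (t - 1) * \<delta>) * C) \<longlongrightarrow> 0) at_top"
    using \<open>\<delta> > 0\<close> by real_asymp
  then have tail_tendsto: "((\<lambda>t. \<Sum>\<^sub>\<infinity>v\<in>-M. F t v) \<longlongrightarrow> 0) at_top"
    by (rule Lim_null_comparison[rotated]) (use tail_bound in \<open>auto simp: eventually_at_top_linorder\<close>)
  have split: "(\<Sum>\<^sub>\<infinity>v. F t v) = (\<Sum>v\<in>M. c v) + (\<Sum>\<^sub>\<infinity>v\<in>-M. F t v)" if "t \<ge> 1" for t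
  proof -
    have "(\<Sum>\<^sub>\<infinity>v. F t v) = (\<Sum>\<^sub>\<infinity>v\<in>M. F t v) + (\<Sum>\<^sub>\<infinity>v\<in>-M. F t v)"
      using infsum_Un_disjoint[of "F t" M "-M"] \<open>finite M\<close> abs_summable_summable[OF tail_abs_summable[OF that]]
      by (simp add: Un_commute)
    then show ?thesis
      using \<open>finite M\<close> by (simp add: F_def h_M)
  qed
  have "((\<lambda>t. (\<Sum>v\<in>M. c v) + (\<Sum>\<^sub>\<infinity>v\<in>-M. F t v)) \<longlongrightarrow> (\<Sum>v\<in>M. c v)) at_top"
    using tendsto_add[OF tendsto_const tail_tendsto] by simp
  then show ?thesis
    unfolding F_def[symmetric]
    by (rule Lim_transform_eventually) (use split in \<open>auto simp: eventually_at_top_linorder intro!: exI[of _ 1]\<close>)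
qed

definition Qr :: "real \<times> real \<Rightarrow> real" where
  "Qr x = fst x ^ 2 + fst x * snd x + 4 * snd x ^ 2"

definition rvec_of_int :: "int \<times> int \<Rightarrow> real \<times> real" where
  "rvec_of_int v = (of_int (fst v), of_int (snd v))"

definition rvec_of_rat :: "rat \<times> rat \<Rightarrow> real \<times> real" where
  "rvec_of_rat v = (of_rat (fst v), of_rat (snd v))"

definition cvec :: "real \<times> real \<Rightarrow> complex \<times> complex" where
  "cvec x = (of_real (fst x), of_real (snd x))"

lemma Qr_completed_square: "Qr x = (fst x + snd x / 2) ^ 2 + 15 / 4 * snd x ^ 2"
  by (simp add: Qr_def power2_eq_square field_simps)

lemma Qr_ge_half_sum_squares: "Qr x \<ge> (fst x ^ 2 + snd x ^ 2) / 2"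
proof -
  have "Qr x - (fst x ^ 2 + snd x ^ 2) / 2 = (fst x + snd x) ^ 2 / 2 + 3 * snd x ^ 2"
    by (simp add: Qr_def power2_eq_square field_simps)
  moreover have "(fst x + snd x) ^ 2 / 2 + 3 * snd x ^ 2 \<ge> 0"
    by simp
  ultimately show ?thesis
    by linarith
qed

lemma power2_of_int_add_ge:
  fixes x :: real
  shows "(of_int n + x) ^ 2 \<ge> \<bar>of_int n\<bar> / 2 - x ^ 2"
proof -
  have "\<bar>n\<bar> \<le> n ^ 2"
  proof (cases "n = 0")
    case False
    then have "\<bar>n\<bar> * 1 \<le> \<bar>n\<bar> * \<bar>n\<bar>"
      by (intro mult_left_mono) auto
    then show ?thesis
      by (simp add: power2_eq_square)
  qed simp
  then have "\<bar>of_int n\<bar> \<le> (of_int n :: real) ^ 2"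
    by (metis of_int_abs of_int_le_iff of_int_power)
  moreover have "(of_int n) ^ 2 / 2 \<le> (of_int n + x) ^ 2 + x ^ 2"
    using zero_le_power2[of "of_int n + 2 * x"] by (simp add: power2_eq_square algebra_simps)
  ultimately show ?thesis
    by linarith
qed

lemma Qr_int_shift_lower_bound:
  "Qr (rvec_of_int v + x) \<ge> (\<bar>of_int (fst v)\<bar> + \<bar>of_int (snd v)\<bar>) / 4 - (fst x ^ 2 + snd x ^ 2) / 2"
proof -
  have "((of_int (fst v) + fst x) ^ 2 + (of_int (snd v) + snd x) ^ 2) / 2 \<le> Qr (rvec_of_int v + x)"
    using Qr_ge_half_sum_squares[of "rvec_of_int v + x"] by (simp add: rvec_of_int_def)
  then show ?thesis
    using power2_of_int_add_ge[of "fst v" "fst x"] power2_of_int_add_ge[of "snd v" "snd x"]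
    by argo
qed

lemma summable_on_exp_Qr:
  assumes "c > 0"
  shows "(\<lambda>v. exp (- c * Qr (rvec_of_int v + x))) summable_on UNIV"
proof (rule summable_on_comparison_test)
  define r where "r = exp (- c / 4)"
  have r: "0 \<le> r" "r < 1"
    using assms by (auto simp: r_def)
  define K where "K = exp (c * (fst x ^ 2 + snd x ^ 2) / 2)"
  show "(\<lambda>v::int \<times> int. K * (r ^ nat \<bar>fst v\<bar> * r ^ nat \<bar>snd v\<bar>)) summable_on UNIV"
    by (rule summable_on_cmult_right[OF summable_on_int_pair_geometric[OF r]])
  fix v :: "int \<times> int"
  have r_power: "r ^ nat \<bar>n\<bar> = exp (- c / 4 * \<bar>of_int n\<bar>)" for n :: int
    unfolding r_def by (simp add: exp_of_nat_mult[symmetric] mult.commute)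
  have "c * ((\<bar>of_int (fst v)\<bar> + \<bar>of_int (snd v)\<bar>) / 4 - (fst x ^ 2 + snd x ^ 2) / 2)
      \<le> c * Qr (rvec_of_int v + x)"
    using Qr_int_shift_lower_bound[of v x] assms by (intro mult_left_mono) auto
  then have "- c * Qr (rvec_of_int v + x)
      \<le> c * (fst x ^ 2 + snd x ^ 2) / 2 + (- c / 4 * \<bar>of_int (fst v)\<bar> + - c / 4 * \<bar>of_int (snd v)\<bar>)"
    by argo
  then show "exp (- c * Qr (rvec_of_int v + x)) \<le> K * (r ^ nat \<bar>fst v\<bar> * r ^ nat \<bar>snd v\<bar>)"
    unfolding K_def r_power by (simp add: exp_add[symmetric])
qed simp

definition shift_point :: "complex \<Rightarrow> real \<times> real \<Rightarrow> real \<times> real \<Rightarrow> complex \<times> complex" where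
  "shift_point \<tau> p w = (of_real (fst w) - \<tau> * of_real (fst p), of_real (snd w) - \<tau> * of_real (snd p))"

lemma e_add: "e (x + y) = e x * e y"
  by (simp add: e_def distrib_left exp_add)

lemma e_of_nat_mult: "e (of_nat k * x) = e x ^ k"
  unfolding e_def by (simp add: exp_of_nat_mult[symmetric] mult_ac)

lemma e_neq_zero: "e x \<noteq> 0"
  by (simp add: e_def)

lemma norm_e_Reals: "x \<in> \<real> \<Longrightarrow> norm (e x) = 1"
  by (auto simp: e_def elim: Reals_cases)

lemma e_of_real: "e (of_real x) = cis (2 * pi * x)"
  by (simp add: e_def cis_conv_exp mult_ac)

lemma e_imaginary: "e (\<i> * of_real t * of_real r) = of_real (exp (- 2 * pi * t * r))"
  by (simp add: e_def exp_of_real[symmetric] mult_ac)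

lemma cvec_add: "cvec (x + y) = cvec x + cvec y"
  and cvec_diff: "cvec (x - y) = cvec x - cvec y"
  by (simp_all add: cvec_def)

lemma vec_of_int_eq_cvec: "vec_of_int v = cvec (rvec_of_int v)"
  by (simp add: vec_of_int_def cvec_def rvec_of_int_def)

lemma of_real_of_rat: "of_real (of_rat q) = (of_rat q :: 'a :: real_field)"
  by (cases q) (simp add: of_rat_rat)

lemma vec_of_rat_eq_cvec: "vec_of_rat \<alpha> = cvec (rvec_of_rat \<alpha>)"
  by (simp add: vec_of_rat_def cvec_def rvec_of_rat_def of_real_of_rat)

lemma Qf_cvec: "Qf (cvec x) = of_real (Qr x)"
  by (simp add: Qf_def Bf_def Qr_def cvec_def power2_eq_square field_simps)

lemma Bf_cvec_Reals: "Bf (cvec x) (cvec y) \<in> \<real>"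
  by (simp add: Bf_def cvec_def)

lemma Bf_shift_point: "Bf x (shift_point \<tau> p w) = Bf x (cvec w) - \<tau> * Bf x (cvec p)"
  by (simp add: Bf_def shift_point_def cvec_def algebra_simps)

lemma Qf_diff: "Qf (x - y) = Qf x - Bf x y + Qf y"
  by (simp add: Qf_def Bf_def field_simps)

lemma theta_summand_at_shift_point:
  "e b * e (\<i> * of_real t * Qf (cvec a) + Bf (cvec a) (shift_point (\<i> * of_real t) p w))
     = exp (- 2 * pi * t * (Qr (a - p) - Qr p)) *\<^sub>R e (b + Bf (cvec a) (cvec w))"
proof -
  have "\<i> * of_real t * Qf (cvec a) + Bf (cvec a) (shift_point (\<i> * of_real t) p w)
      = Bf (cvec a) (cvec w) + \<i> * of_real t * of_real (Qr (a - p) - Qr p)"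
    by (simp add: Bf_shift_point Qf_cvec[symmetric] cvec_diff Qf_diff algebra_simps)
  then show ?thesis
    by (simp only: e_add e_imaginary scaleR_conv_of_real) (simp add: mult_ac)
qed

lemma theta_at_shift_point:
  "theta \<alpha> \<beta> (\<i> * of_real t) (shift_point (\<i> * of_real t) p w)
     = (\<Sum>\<^sub>\<infinity>v. exp (- 2 * pi * t * (Qr (rvec_of_rat \<alpha> + rvec_of_int v - p) - Qr p))
          *\<^sub>R e (Bf (vec_of_rat \<beta>) (vec_of_int v) + Bf (vec_of_rat \<alpha> + vec_of_int v) (cvec w)))"
  unfolding theta_def vec_of_int_eq_cvec vec_of_rat_eq_cvec cvec_add[symmetric]
  by (simp only: theta_summand_at_shift_point)

lemma tendsto_theta_at_shift_point:
  fixes \<alpha> \<beta> :: "rat \<times> rat" and p w :: "real \<times> real"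
  assumes "finite M"
    and minimal: "\<And>v. v \<in> M \<Longrightarrow> Qr (rvec_of_rat \<alpha> + rvec_of_int v - p) = m"
    and gap: "\<And>v. v \<notin> M \<Longrightarrow> Qr (rvec_of_rat \<alpha> + rvec_of_int v - p) \<ge> m + \<delta>" and "\<delta> > 0"
  shows "((\<lambda>t. exp (2 * pi * t * (m - Qr p)) *\<^sub>R theta \<alpha> \<beta> (\<i> * of_real t) (shift_point (\<i> * of_real t) p w))
     \<longlongrightarrow> (\<Sum>v\<in>M. e (Bf (vec_of_rat \<beta>) (vec_of_int v) + Bf (vec_of_rat \<alpha> + vec_of_int v) (cvec w)))) at_top"
proof -
  define h where "h v = 2 * pi * (Qr (rvec_of_rat \<alpha> + rvec_of_int v - p) - m)" for v
  define c where "c v = e (Bf (vec_of_rat \<beta>) (vec_of_int v) + Bf (vec_of_rat \<alpha> + vec_of_int v) (cvec w))" for v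
  have "exp (2 * pi * t * (m - Qr p)) *\<^sub>R theta \<alpha> \<beta> (\<i> * of_real t) (shift_point (\<i> * of_real t) p w)
      = (\<Sum>\<^sub>\<infinity>v. exp (- t * h v) *\<^sub>R c v)" for t
  proof -
    have "exp (2 * pi * t * (m - Qr p)) * exp (- 2 * pi * t * (Qr (rvec_of_rat \<alpha> + rvec_of_int v - p) - Qr p))
        = exp (- t * h v)" for v
      by (simp add: h_def exp_add[symmetric] algebra_simps)
    then show ?thesis
      by (simp add: theta_at_shift_point c_def flip: infsum_scaleR_right)
  qed
  moreover have "((\<lambda>t. \<Sum>\<^sub>\<infinity>v. exp (- t * h v) *\<^sub>R c v) \<longlongrightarrow> (\<Sum>v\<in>M. c v)) at_top"
  proof (rule tendsto_infsum_exp_decay[where \<delta> = "2 * pi * \<delta>"])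
    show "norm (c v) \<le> 1" for v
      unfolding c_def vec_of_int_eq_cvec vec_of_rat_eq_cvec cvec_add[symmetric]
      by (simp add: norm_e_Reals Bf_cvec_Reals)
    have "exp (- h v) = exp (2 * pi * m) * exp (- (2 * pi) * Qr (rvec_of_int v + (rvec_of_rat \<alpha> - p)))" for v
      by (simp add: h_def exp_add[symmetric] algebra_simps)
    moreover have "(\<lambda>v. exp (2 * pi * m) * exp (- (2 * pi) * Qr (rvec_of_int v + (rvec_of_rat \<alpha> - p))))
        summable_on UNIV"
      by (intro summable_on_cmult_right summable_on_exp_Qr) simp
    ultimately show "(\<lambda>v. exp (- h v)) summable_on UNIV"
      by simp
    show "h v = 0" if "v \<in> M" for v
      using minimal[OF that] by (simp add: h_def)
    show "h v \<ge> 2 * pi * \<delta>" if "v \<notin> M" for v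
      using gap[OF that] by (simp add: h_def)
  qed (use assms in auto)
  ultimately show ?thesis
    by (simp add: c_def)
qed

lemma Qr_ge_of_third:
  fixes k :: int
  assumes "k \<noteq> 0"
  shows "Qr (x, of_int k / 3) \<ge> 5 / 12"
proof -
  have "1 \<le> \<bar>of_int k :: real\<bar>"
    using assms by linarith
  then have "1 \<le> (of_int k :: real) ^ 2"
    using abs_le_square_iff[of 1 "of_int k :: real"] by simp
  then show ?thesis
    using zero_le_power2[of "x + of_int k / 6"]
    by (simp add: Qr_completed_square power_divide, linarith)
qed

lemma Qr_half_shift_ge:
  assumes "v \<notin> {(0, 0), (1, 0)}"
  shows "Qr (rvec_of_int v - (1 / 2, 0)) \<ge> 5 / 12"
proof (cases "snd v = 0")
  case True
  then have "1 \<le> \<bar>of_int (fst v) - 1 / 2 :: real\<bar>"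
    using assms by (cases v) auto
  then have "1 \<le> (of_int (fst v) - 1 / 2 :: real) ^ 2"
    using abs_le_square_iff[of 1 "of_int (fst v) - 1 / 2 :: real"] by simp
  then show ?thesis
    using True by (simp add: Qr_def rvec_of_int_def)
next
  case False
  then show ?thesis
    using Qr_ge_of_third[of "3 * snd v" "of_int (fst v) - 1 / 2"] by (simp add: rvec_of_int_def)
qed

lemma tendsto_theta_thirds_diagonal:
  fixes j k :: nat and s :: real
  defines "p \<equiv> (real j / 3 + 1 / 2, real j / 3)"
  shows "((\<lambda>t. exp (2 * pi * t * (1 / 4 - Qr p)) *\<^sub>R
      theta (of_nat j / 3, of_nat j / 3) (of_nat k / 3, 0) (\<i> * of_real t) (shift_point (\<i> * of_real t) p (s, 0)))
    \<longlongrightarrow> e (of_nat j * of_real s) * (1 + e (2 / 3) ^ k * e (2 * of_real s))) at_top"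
proof -
  define phase where "phase v = e (Bf (vec_of_rat (of_nat k / 3, 0)) (vec_of_int v)
      + Bf (vec_of_rat (of_nat j / 3, of_nat j / 3) + vec_of_int v) (cvec (s, 0)))" for v
  have offset: "rvec_of_rat (of_nat j / 3, of_nat j / 3) + rvec_of_int v - p = rvec_of_int v - (1 / 2, 0)" for v
    by (simp add: p_def rvec_of_rat_def rvec_of_int_def of_rat_divide)
  have "((\<lambda>t. exp (2 * pi * t * (1 / 4 - Qr p)) *\<^sub>R
      theta (of_nat j / 3, of_nat j / 3) (of_nat k / 3, 0) (\<i> * of_real t) (shift_point (\<i> * of_real t) p (s, 0)))
    \<longlongrightarrow> (\<Sum>v\<in>{(0, 0), (1, 0)}. phase v)) at_top"
    unfolding phase_def
  proof (rule tendsto_theta_at_shift_point[where \<delta> = "1 / 6"])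
    show "Qr (rvec_of_rat (of_nat j / 3, of_nat j / 3) + rvec_of_int v - p) = 1 / 4"
      if "v \<in> {(0, 0), (1, 0)}" for v
      using that unfolding offset by (auto simp: Qr_def rvec_of_int_def power2_eq_square)
    show "Qr (rvec_of_rat (of_nat j / 3, of_nat j / 3) + rvec_of_int v - p) \<ge> 1 / 4 + 1 / 6"
      if "v \<notin> {(0, 0), (1, 0)}" for v
      using Qr_half_shift_ge[OF that] by (simp add: offset)
  qed auto
  moreover have "phase (0, 0) = e (of_nat j * of_real s)"
    by (simp add: phase_def Bf_def vec_of_rat_def vec_of_int_def cvec_def of_rat_divide field_simps)
  moreover have "phase (1, 0) = e (of_nat k * (2 / 3) + of_nat j * of_real s + 2 * of_real s)"
    by (simp add: phase_def Bf_def vec_of_rat_def vec_of_int_def cvec_def of_rat_divide field_simps)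
  then have "phase (1, 0) = e (2 / 3) ^ k * e (of_nat j * of_real s) * e (2 * of_real s)"
    by (simp only: e_add e_of_nat_mult)
  ultimately show ?thesis
    by (simp add: ring_distribs mult_ac)
qed

lemma tendsto_theta_thirds_off_diagonal:
  fixes j j' k :: nat and s :: real
  assumes "j \<le> 2" "j' \<le> 2" "j' \<noteq> j"
  defines "p \<equiv> (real j / 3 + 1 / 2, real j / 3)"
  shows "((\<lambda>t. exp (2 * pi * t * (1 / 4 - Qr p)) *\<^sub>R
      theta (of_nat j' / 3, of_nat j' / 3) (of_nat k / 3, 0) (\<i> * of_real t) (shift_point (\<i> * of_real t) p (s, 0)))
    \<longlongrightarrow> 0) at_top"
proof -
  define d where "d = int j' - int j"
  have "\<not> 3 dvd d"
    using assms unfolding d_def by presburger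
  then have d_nonzero: "3 * snd v + d \<noteq> 0" for v :: "int \<times> int"
    by presburger
  have "rvec_of_rat (of_nat j' / 3, of_nat j' / 3) + rvec_of_int v - p
      = (of_int (fst v) + of_int d / 3 - 1 / 2, of_int (3 * snd v + d) / 3)" for v
    by (simp add: p_def d_def rvec_of_rat_def rvec_of_int_def of_rat_divide field_simps)
  then have "Qr (rvec_of_rat (of_nat j' / 3, of_nat j' / 3) + rvec_of_int v - p) \<ge> 1 / 4 + 1 / 6" for v
    using Qr_ge_of_third[OF d_nonzero] by simp
  then show ?thesis
    using tendsto_theta_at_shift_point[where M = "{}" and m = "1 / 4" and \<delta> = "1 / 6"
        and \<alpha> = "(of_nat j' / 3, of_nat j' / 3)" and \<beta> = "(of_nat k / 3, 0)" and p = p and w = "(s, 0)"]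
    by simp
qed

lemma e_two_thirds_root_of_unity: "e (2 / 3) ^ 2 + e (2 / 3) + 1 = 0"
proof -
  define \<omega> where "\<omega> = e (2 / 3)"
  have "\<omega> ^ 3 = e (of_nat 3 * (2 / 3))"
    unfolding \<omega>_def by (rule e_of_nat_mult[symmetric])
  also have "\<dots> = cis (2 * pi * 2)"
    using e_of_real[of 2] by simp
  finally have "\<omega> ^ 3 = 1"
    using cis_multiple_2pi[of 2] by simp
  moreover have "Im \<omega> = sin (2 * pi * (2 / 3))"
    using e_of_real[of "2 / 3"] by (simp add: \<omega>_def)
  then have "\<omega> \<noteq> 1"
    using sin_lt_zero[of "2 * pi * (2 / 3)"] by auto
  moreover have "\<omega> ^ 3 - 1 = (\<omega> - 1) * (\<omega> ^ 2 + \<omega> + 1)"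
    by algebra
  ultimately show ?thesis
    unfolding \<omega>_def[symmetric] by simp
qed

lemma independent_twisted_cubes:
  fixes a b c \<omega> :: complex
  assumes \<omega>: "\<omega> ^ 2 + \<omega> + 1 = 0"
    and vanish: "\<And>r. r \<in> {1, -1, \<i>} \<Longrightarrow> a * (1 + r) ^ 3 + b * (1 + \<omega> * r) ^ 3 + c * (1 + \<omega> ^ 2 * r) ^ 3 = 0"
  shows "a = 0 \<and> b = 0 \<and> c = 0"
proof -
  define S where "S = a + b + c"
  define A where "A = a + b * \<omega> + c * \<omega> ^ 2"
  define A' where "A' = a + b * \<omega> ^ 2 + c * \<omega>"
  have \<omega>3: "\<omega> ^ 3 = 1"
    using \<omega> by algebra
  have expansion: "a * (1 + r) ^ 3 + b * (1 + \<omega> * r) ^ 3 + c * (1 + \<omega> ^ 2 * r) ^ 3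
      = S * (1 + r ^ 3) + 3 * A * r + 3 * A' * r ^ 2" for r
    using \<omega>3 unfolding S_def A_def A'_def by algebra
  have "S * 2 + 3 * A + 3 * A' = 0" "- 3 * A + 3 * A' = 0" "S * (1 - \<i>) + 3 * A * \<i> - 3 * A' = 0"
    using vanish[of 1] vanish[of "-1"] vanish[of \<i>] unfolding expansion by (simp_all add: power3_eq_cube)
  then have "S = 0" "A = 0" "A' = 0"
    by (auto simp: complex_eq_iff)
  moreover have "3 * a = S + A + A'" "3 * b = S + \<omega> ^ 2 * A + \<omega> * A'" "3 * c = S + \<omega> * A + \<omega> ^ 2 * A'"
    using \<omega> \<omega>3 unfolding S_def A_def A'_def by algebra+
  ultimately show ?thesis
    by simp
qed

lemma tendsto_theta_cubes_combination:
  fixes c :: "nat \<Rightarrow> nat \<Rightarrow> complex" and s :: real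
  assumes "j \<le> 2"
  defines "p \<equiv> (real j / 3 + 1 / 2, real j / 3)"
  shows "((\<lambda>t. \<Sum>j'\<in>{0,1,2}. \<Sum>k\<in>{0,1,2}. c j' k * (exp (2 * pi * t * (1 / 4 - Qr p)) *\<^sub>R
      theta (of_nat j' / 3, of_nat j' / 3) (of_nat k / 3, 0) (\<i> * of_real t) (shift_point (\<i> * of_real t) p (s, 0))) ^ 3)
    \<longlongrightarrow> e (of_nat j * of_real s) ^ 3 * (\<Sum>k\<in>{0,1,2}. c j k * (1 + e (2 / 3) ^ k * e (2 * of_real s)) ^ 3)) at_top"
proof -
  define L where "L j' k = (if j' = j then e (of_nat j * of_real s) * (1 + e (2 / 3) ^ k * e (2 * of_real s)) else 0)"
    for j' k
  have "((\<lambda>t. exp (2 * pi * t * (1 / 4 - Qr p)) *\<^sub>R theta (of_nat j' / 3, of_nat j' / 3) (of_nat k / 3, 0)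
      (\<i> * of_real t) (shift_point (\<i> * of_real t) p (s, 0))) \<longlongrightarrow> L j' k) at_top"
    if "j' \<in> {0,1,2}" for j' k
    using tendsto_theta_thirds_diagonal[of j k s] tendsto_theta_thirds_off_diagonal[of j j' k s] \<open>j \<le> 2\<close> that
    unfolding L_def p_def by auto
  then have "((\<lambda>t. \<Sum>j'\<in>{0,1,2}. \<Sum>k\<in>{0,1,2}. c j' k * (exp (2 * pi * t * (1 / 4 - Qr p)) *\<^sub>R
      theta (of_nat j' / 3, of_nat j' / 3) (of_nat k / 3, 0) (\<i> * of_real t) (shift_point (\<i> * of_real t) p (s, 0))) ^ 3)
    \<longlongrightarrow> (\<Sum>j'\<in>{0,1,2}. \<Sum>k\<in>{0,1,2}. c j' k * L j' k ^ 3)) at_top"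
    by (intro tendsto_sum tendsto_mult_left tendsto_power)
  also have "(\<Sum>j'\<in>{0,1,2}. \<Sum>k\<in>{0,1,2}. c j' k * L j' k ^ 3)
      = (\<Sum>j'\<in>{0,1,2}. if j' = j then \<Sum>k\<in>{0,1,2}. c j k * L j k ^ 3 else 0)"
    by (rule sum.cong) (auto simp: L_def)
  also have "\<dots> = (\<Sum>k\<in>{0,1,2}. c j k * L j k ^ 3)"
    using \<open>j \<le> 2\<close> by (subst sum.delta) auto
  also have "\<dots> = e (of_nat j * of_real s) ^ 3 * (\<Sum>k\<in>{0,1,2}. c j k * (1 + e (2 / 3) ^ k * e (2 * of_real s)) ^ 3)"
    unfolding sum_distrib_left by (intro sum.cong refl) (simp add: L_def power_mult_distrib mult_ac)
  finally show ?thesis .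
qed

lemma theta_cubes_relation:
  fixes c :: "nat \<Rightarrow> nat \<Rightarrow> complex" and s :: real
  assumes vanish: "\<And>\<tau> z. Im \<tau> > 0 \<Longrightarrow>
     (\<Sum>j\<in>{0,1,2}. \<Sum>k\<in>{0,1,2}.
        c j k * (theta (of_nat j / 3, of_nat j / 3) (of_nat k / 3, 0) \<tau> z) ^ 3) = 0"
    and "j \<le> 2"
  shows "(\<Sum>k\<in>{0,1,2}. c j k * (1 + e (2 / 3) ^ k * e (2 * of_real s)) ^ 3) = 0"
proof -
  define p where "p = (real j / 3 + 1 / 2, real j / 3)"
  have "eventually (\<lambda>t. (\<Sum>j'\<in>{0,1,2}. \<Sum>k\<in>{0,1,2}. c j' k * (exp (2 * pi * t * (1 / 4 - Qr p)) *\<^sub>R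
      theta (of_nat j' / 3, of_nat j' / 3) (of_nat k / 3, 0) (\<i> * of_real t) (shift_point (\<i> * of_real t) p (s, 0))) ^ 3)
      = 0) at_top"
    using eventually_gt_at_top[of 0]
  proof eventually_elim
    case (elim t)
    have "(\<Sum>j'\<in>{0,1,2}. \<Sum>k\<in>{0,1,2}. c j' k * (exp (2 * pi * t * (1 / 4 - Qr p)) *\<^sub>R
        theta (of_nat j' / 3, of_nat j' / 3) (of_nat k / 3, 0) (\<i> * of_real t) (shift_point (\<i> * of_real t) p (s, 0))) ^ 3)
      = of_real (exp (2 * pi * t * (1 / 4 - Qr p)) ^ 3) * (\<Sum>j'\<in>{0,1,2}. \<Sum>k\<in>{0,1,2}. c j' k *
        theta (of_nat j' / 3, of_nat j' / 3) (of_nat k / 3, 0) (\<i> * of_real t) (shift_point (\<i> * of_real t) p (s, 0)) ^ 3)"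
      unfolding sum_distrib_left
      by (intro sum.cong refl) (simp add: scaleR_conv_of_real power_mult_distrib mult_ac)
    also have "\<dots> = 0"
      using vanish[of "\<i> * of_real t"] elim by simp
    finally show ?case .
  qed
  from Lim_transform_eventually[OF tendsto_theta_cubes_combination[OF \<open>j \<le> 2\<close>] this[unfolded p_def]]
  have "e (of_nat j * of_real s) ^ 3 * (\<Sum>k\<in>{0,1,2}. c j k * (1 + e (2 / 3) ^ k * e (2 * of_real s)) ^ 3) = 0"
    by (simp add: tendsto_const_iff)
  then show ?thesis
    by (simp add: e_neq_zero)
qed

theorem proposition7p15:
  fixes c :: "nat \<Rightarrow> nat \<Rightarrow> complex"
  assumes "\<And>\<tau> z. Im \<tau> > 0 \<Longrightarrow>
     (\<Sum>j\<in>{0,1,2}. \<Sum>k\<in>{0,1,2}.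
        c j k * (theta (of_nat j / 3, of_nat j / 3) (of_nat k / 3, 0) \<tau> z) ^ 3) = 0"
  shows "\<forall>j\<in>{0,1,2}. \<forall>k\<in>{0,1,2}. c j k = 0"
proof (intro ballI)
  fix j k :: nat
  assume "j \<in> {0,1,2}" "k \<in> {0,1,2}"
  have "e (2 * of_real s) = r \<Longrightarrow>
      c j 0 * (1 + r) ^ 3 + c j 1 * (1 + e (2 / 3) * r) ^ 3 + c j 2 * (1 + e (2 / 3) ^ 2 * r) ^ 3 = 0" for r s
    using theta_cubes_relation[OF assms, of j s] \<open>j \<in> {0,1,2}\<close> by (auto simp: add.assoc)
  moreover have "e (2 * of_real 0) = 1" "e (2 * of_real (1 / 4)) = -1" "e (2 * of_real (1 / 8)) = \<i>"
    using e_of_real[of 0] e_of_real[of "1 / 2"] e_of_real[of "1 / 4"] by simp_all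
  ultimately have "c j 0 = 0 \<and> c j 1 = 0 \<and> c j 2 = 0"
    by (intro independent_twisted_cubes[OF e_two_thirds_root_of_unity]) blast
  then show "c j k = 0"
    using \<open>k \<in> {0,1,2}\<close> by auto
qed

end
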